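(* Let $F=F(N,\mathcal D)$ be a connected GSC and let $x$ be a cut point of $F$. Then there exist $n_0\ge1$ and two distinct words $\omega,\tau\in\mathcal D^{n_0}\setminus\Omega_{n_0}(x)$ that are well separated by $x$.
   Context: GSC: $N\ge2$, $\mathcal D\subset\{0,\dots,N-1\}^2$ with $1<|\mathcal D|<N^2$, $\varphi_i(x)=\frac1N(x+i)$, $F$ the attractor $F=\bigcup_{i\in\mathcal D}\varphi_i(F)$; $\varphi_{i_1\cdots i_k}=\varphi_{i_1}\circ\cdots\circ\varphi_{i_k}$. For $x\in F$, $k\ge1$: $\Omega_k(x)=\{\mathbf i\in\mathcal D^k: x\in\varphi_{\mathbf i}(F)\}$ and $E_k(x)=\bigcup_{\mathbf j\in\mathcal D^k\setminus\Omega_k(x)}\varphi_{\mathbf j}(F)$. Words $\omega,\tau\in\mathcal D^n\setminus\Omega_n(x)$ are well separated by $x$ if for every $p\ge1$, $\varphi_\omega(F)$ and $\varphi_\tau(F)$ lie in different connected components of $E_{n+p}(x)$. *)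

theory Defs
  imports "HOL-Analysis.Analysis"
begin

definition gsc_digits :: "nat \<Rightarrow> (nat \<times> nat) set \<Rightarrow> bool" where
  "gsc_digits N D \<longleftrightarrow> N \<ge> 2 \<and> D \<subseteq> {0..<N} \<times> {0..<N} \<and> 1 < card D \<and> card D < N^2"

definition gsc_map :: "nat \<Rightarrow> nat \<times> nat \<Rightarrow> real \<times> real \<Rightarrow> real \<times> real" where
  "gsc_map N i x = (1 / real N) *\<^sub>R (x + (real (fst i), real (snd i)))"

definition gsc_attractor :: "nat \<Rightarrow> (nat \<times> nat) set \<Rightarrow> (real \<times> real) set \<Rightarrow> bool" where
  "gsc_attractor N D F \<longleftrightarrow> gsc_digits N D \<and> compact F \<and> F \<noteq> {} \<and>
     F = (\<Union>i\<in>D. gsc_map N i ` F)"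

definition word_map :: "nat \<Rightarrow> (nat \<times> nat) list \<Rightarrow> real \<times> real \<Rightarrow> real \<times> real" where
  "word_map N w = foldr (\<lambda>i f. gsc_map N i \<circ> f) w id"

definition words :: "(nat \<times> nat) set \<Rightarrow> nat \<Rightarrow> (nat \<times> nat) list set" where
  "words D k = {w. length w = k \<and> set w \<subseteq> D}"

definition Omega :: "nat \<Rightarrow> (nat \<times> nat) set \<Rightarrow> (real \<times> real) set \<Rightarrow> nat \<Rightarrow> real \<times> real
    \<Rightarrow> (nat \<times> nat) list set" where
  "Omega N D F k x = {w \<in> words D k. x \<in> word_map N w ` F}"

definition Eset :: "nat \<Rightarrow> (nat \<times> nat) set \<Rightarrow> (real \<times> real) set \<Rightarrow> nat \<Rightarrow> real \<times> real
    \<Rightarrow> (real \<times> real) set" where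
  "Eset N D F k x = (\<Union>w \<in> words D k - Omega N D F k x. word_map N w ` F)"

definition cut_point :: "(real \<times> real) set \<Rightarrow> real \<times> real \<Rightarrow> bool" where
  "cut_point F x \<longleftrightarrow> x \<in> F \<and> \<not> connected (F - {x})"

definition well_separated :: "nat \<Rightarrow> (nat \<times> nat) set \<Rightarrow> (real \<times> real) set \<Rightarrow> nat \<Rightarrow> real \<times> real
    \<Rightarrow> (nat \<times> nat) list \<Rightarrow> (nat \<times> nat) list \<Rightarrow> bool" where
  "well_separated N D F n x \<omega> \<tau> \<longleftrightarrow>
     \<omega> \<in> words D n - Omega N D F n x \<and> \<tau> \<in> words D n - Omega N D F n x \<and>
     (\<forall>p\<ge>1. \<exists>C1 \<in> components (Eset N D F (n + p) x). \<exists>C2 \<in> components (Eset N D F (n + p) x).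
        word_map N \<omega> ` F \<subseteq> C1 \<and> word_map N \<tau> ` F \<subseteq> C2 \<and> C1 \<noteq> C2)"

end

theory Submission
  imports Defs
begin

text \<open>Choose points u, v in different components of F - {x} and a level n so fine that
level-n cells have diameter less than the distances from u and v to x. Cells containing u
and v then avoid x, so at every deeper level they lie in E(x) \<subseteq> F - {x}; as they are
connected, they sit in the components of E(x) through u and v, which differ because u and v
are not even connected within F - {x}.\<close>

lemma word_map_Nil [simp]: "word_map N [] = id"
  by (simp add: word_map_def)

lemma word_map_Cons [simp]: "word_map N (i # w) = gsc_map N i \<circ> word_map N w"
  by (simp add: word_map_def)

lemma word_map_append: "word_map N (w @ v) = word_map N w \<circ> word_map N v"
  by (induction w) auto

lemma word_map_image_subset:
  assumes "gsc_attractor N D F" "set w \<subseteq> D"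
  shows "word_map N w ` F \<subseteq> F"
  using assms(2)
proof (induction w)
  case (Cons i w)
  then have "gsc_map N i ` (word_map N w ` F) \<subseteq> gsc_map N i ` F" by auto
  also have "\<dots> \<subseteq> F" using Cons.prems assms(1) unfolding gsc_attractor_def by auto
  finally show ?case by (simp add: image_comp)
qed simp

lemma attractor_covered_by_words:
  assumes "gsc_attractor N D F" "y \<in> F"
  shows "\<exists>w \<in> words D p. y \<in> word_map N w ` F"
  using assms(2)
proof (induction p arbitrary: y)
  case 0
  then show ?case by (simp add: words_def)
next
  case (Suc p)
  have "F = (\<Union>i\<in>D. gsc_map N i ` F)" using assms(1) unfolding gsc_attractor_def by auto
  with Suc.prems obtain i z where i: "i \<in> D" "z \<in> F" "y = gsc_map N i z" by blast
  from Suc.IH[OF i(2)] obtain w where "w \<in> words D p" "z \<in> word_map N w ` F" by blast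
  with i have "i # w \<in> words D (Suc p)" "y \<in> word_map N (i # w) ` F"
    by (auto simp: words_def image_comp)
  then show ?case by blast
qed

lemma dist_gsc_map: "dist (gsc_map N i a) (gsc_map N i b) = dist a b / real N"
proof -
  have "gsc_map N i a - gsc_map N i b = (1 / real N) *\<^sub>R (a - b)"
    unfolding gsc_map_def by (simp add: algebra_simps)
  then show ?thesis by (simp add: dist_norm)
qed

lemma dist_word_map: "dist (word_map N w a) (word_map N w b) = dist a b / real N ^ length w"
  by (induction w) (simp_all add: dist_gsc_map)

lemma continuous_on_word_map: "continuous_on S (word_map N w)"
proof (induction w)
  case (Cons i w)
  have "continuous_on (word_map N w ` S) (gsc_map N i)"
    unfolding gsc_map_def by (intro continuous_intros)
  with Cons.IH have "continuous_on S (gsc_map N i \<circ> word_map N w)"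
    by (rule continuous_on_compose)
  then show ?case by (simp only: word_map_Cons)
qed simp

lemma cells_eventually_small:
  assumes "gsc_attractor N D F" "r > 0"
  shows "\<exists>n\<ge>1. \<forall>w. length w = n \<longrightarrow> (\<forall>a\<in>F. \<forall>b\<in>F. dist (word_map N w a) (word_map N w b) < r)"
proof -
  have N: "real N \<ge> 2" and F: "bounded F"
    using assms(1) compact_imp_bounded unfolding gsc_attractor_def gsc_digits_def by auto
  define d where "d = diameter F + 1"
  have d: "d > 0" "\<And>a b. a \<in> F \<Longrightarrow> b \<in> F \<Longrightarrow> dist a b \<le> d"
    using diameter_ge_0[OF F] diameter_bounded_bound[OF F] unfolding d_def by force+
  obtain n where n: "(1 / real N) ^ n < r / d"
    using real_arch_pow_inv[of "r / d" "1 / real N"] assms(2) d(1) N by auto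
  have "dist (word_map N w a) (word_map N w b) < r"
    if "length w = Suc n" "a \<in> F" "b \<in> F" for w a b
  proof -
    have "dist (word_map N w a) (word_map N w b) \<le> d * (1 / real N) ^ Suc n"
      using that d(2)[of a b] N by (simp add: dist_word_map field_simps)
    also have "\<dots> \<le> d * (1 / real N) ^ n"
      using d(1) N by (intro mult_left_mono power_decreasing) auto
    also have "\<dots> < r" using n d(1) by (simp add: field_simps)
    finally show ?thesis .
  qed
  then show ?thesis by (intro exI[of _ "Suc n"]) auto
qed

lemma cell_avoiding_point:
  assumes "gsc_attractor N D F" "y \<in> F"
    and small: "\<And>w a b. length w = n \<Longrightarrow> a \<in> F \<Longrightarrow> b \<in> F \<Longrightarrow>
      dist (word_map N w a) (word_map N w b) < dist y x"
  shows "\<exists>w \<in> words D n - Omega N D F n x. y \<in> word_map N w ` F"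
proof -
  obtain w where w: "w \<in> words D n" "y \<in> word_map N w ` F"
    using attractor_covered_by_words[OF assms(1,2)] by blast
  have "x \<notin> word_map N w ` F"
  proof
    assume "x \<in> word_map N w ` F"
    then obtain b where "b \<in> F" "x = word_map N w b" by blast
    moreover obtain a where "a \<in> F" "y = word_map N w a" using w(2) by blast
    moreover have "length w = n" using w(1) by (simp add: words_def)
    ultimately show False using small by fastforce
  qed
  with w show ?thesis unfolding Omega_def by blast
qed

lemma Eset_subset:
  assumes "gsc_attractor N D F"
  shows "Eset N D F k x \<subseteq> F - {x}"
  using word_map_image_subset[OF assms] unfolding Eset_def Omega_def words_def by blast

lemma cell_subset_Eset:
  assumes "gsc_attractor N D F" "w \<in> words D n - Omega N D F n x"
  shows "word_map N w ` F \<subseteq> Eset N D F (n + p) x"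
proof
  fix y assume "y \<in> word_map N w ` F"
  then obtain z where z: "z \<in> F" "y = word_map N w z" by auto
  obtain v where v: "v \<in> words D p" "z \<in> word_map N v ` F"
    using attractor_covered_by_words[OF assms(1) z(1)] by blast
  have cell: "word_map N (w @ v) ` F = word_map N w ` (word_map N v ` F)"
    by (simp add: word_map_append image_comp)
  have "word_map N (w @ v) ` F \<subseteq> word_map N w ` F"
    unfolding cell using word_map_image_subset[OF assms(1)] v(1) by (auto simp: words_def)
  then have "w @ v \<in> words D (n + p) - Omega N D F (n + p) x"
    using assms(2) v(1) unfolding words_def Omega_def by auto
  moreover have "y \<in> word_map N (w @ v) ` F" unfolding cell using z v by auto
  ultimately show "y \<in> Eset N D F (n + p) x" unfolding Eset_def by blast
qed

lemma connected_word_map_image: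
  assumes "connected F"
  shows "connected (word_map N w ` F)"
  using connected_continuous_image[OF continuous_on_word_map assms] .

lemma well_separated_if_not_connected_component:
  assumes "gsc_attractor N D F" "connected F"
    and \<omega>: "\<omega> \<in> words D n - Omega N D F n x" "u \<in> word_map N \<omega> ` F"
    and \<tau>: "\<tau> \<in> words D n - Omega N D F n x" "v \<in> word_map N \<tau> ` F"
    and uv: "\<not> connected_component (F - {x}) u v"
  shows "well_separated N D F n x \<omega> \<tau>"
  unfolding well_separated_def
proof (intro conjI \<omega>(1) \<tau>(1) allI impI)
  fix p :: nat
  define E where "E = Eset N D F (n + p) x"
  have \<omega>E: "word_map N \<omega> ` F \<subseteq> E" and \<tau>E: "word_map N \<tau> ` F \<subseteq> E"
    unfolding E_def using cell_subset_Eset[OF assms(1)] \<omega>(1) \<tau>(1) by auto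
  with \<omega>(2) \<tau>(2) have "u \<in> E" "v \<in> E" by auto
  have "connected_component_set E u \<noteq> connected_component_set E v"
  proof
    assume "connected_component_set E u = connected_component_set E v"
    then have "connected_component E u v"
      using connected_component_refl[OF \<open>v \<in> E\<close>] by (metis mem_Collect_eq)
    moreover have "E \<subseteq> F - {x}" unfolding E_def by (rule Eset_subset[OF assms(1)])
    ultimately show False using uv connected_component_of_subset by blast
  qed
  moreover have "word_map N \<omega> ` F \<subseteq> connected_component_set E u"
    using connected_component_maximal \<omega>(2) connected_word_map_image[OF assms(2)] \<omega>E .
  moreover have "word_map N \<tau> ` F \<subseteq> connected_component_set E v"
    using connected_component_maximal \<tau>(2) connected_word_map_image[OF assms(2)] \<tau>E .
  ultimately show "\<exists>C1\<in>components (Eset N D F (n + p) x). \<exists>C2\<in>components (Eset N D F (n + p) x).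
      word_map N \<omega> ` F \<subseteq> C1 \<and> word_map N \<tau> ` F \<subseteq> C2 \<and> C1 \<noteq> C2"
    unfolding E_def[symmetric] using componentsI[OF \<open>u \<in> E\<close>] componentsI[OF \<open>v \<in> E\<close>] by blast
qed

theorem mainTheorem17:
  fixes N :: nat and D :: "(nat \<times> nat) set" and F :: "(real \<times> real) set" and x :: "real \<times> real"
  assumes "gsc_attractor N D F"
    and "connected F"
    and "cut_point F x"
  shows "\<exists>n0\<ge>1. \<exists>\<omega> \<tau>. \<omega> \<in> words D n0 - Omega N D F n0 x \<and> \<tau> \<in> words D n0 - Omega N D F n0 x
           \<and> \<omega> \<noteq> \<tau> \<and> well_separated N D F n0 x \<omega> \<tau>"
proof -
  obtain u v where uv: "u \<in> F - {x}" "v \<in> F - {x}" "\<not> connected_component (F - {x}) u v"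
    using assms(3) connected_iff_connected_component unfolding cut_point_def by blast
  define r where "r = min (dist u x) (dist v x)"
  have "r > 0" unfolding r_def using uv(1,2) by auto
  then obtain n where "n \<ge> 1" and small: "\<And>w a b. length w = n \<Longrightarrow> a \<in> F \<Longrightarrow> b \<in> F \<Longrightarrow>
      dist (word_map N w a) (word_map N w b) < r"
    using cells_eventually_small[OF assms(1)] by blast
  obtain \<omega> where \<omega>: "\<omega> \<in> words D n - Omega N D F n x" "u \<in> word_map N \<omega> ` F"
    using cell_avoiding_point[OF assms(1)] uv(1) small unfolding r_def
    by (metis DiffD1 min.strict_boundedE)
  obtain \<tau> where \<tau>: "\<tau> \<in> words D n - Omega N D F n x" "v \<in> word_map N \<tau> ` F"
    using cell_avoiding_point[OF assms(1)] uv(2) small unfolding r_def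
    by (metis DiffD1 min.strict_boundedE)
  have "word_map N \<omega> ` F \<subseteq> F - {x}"
    using word_map_image_subset[OF assms(1)] \<omega>(1) unfolding words_def Omega_def by blast
  then have "\<omega> \<noteq> \<tau>"
    using connected_word_map_image[OF assms(2)] \<omega>(2) \<tau>(2) uv(3)
    unfolding connected_component_def by blast
  moreover have "well_separated N D F n x \<omega> \<tau>"
    by (rule well_separated_if_not_connected_component[OF assms(1,2) \<omega> \<tau> uv(3)])
  ultimately show ?thesis using \<open>n \<ge> 1\<close> \<omega>(1) \<tau>(1) by blast
qed

end
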